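(* Let $M$ be an $N$-person normal form game matrix of dimensions $m_1\times\cdots\times m_N$ with payoffs $a^k_{i_1\dots i_N}$, and fix a profile $(p_1,\dots,p_N)$ with $1\le p_k\le m_k$. Let $S$ be the set of profiles that differ from $(p_1,\dots,p_N)$ in at most one coordinate. Suppose we are given real numbers $x^k_{\sigma}$ for each player $k\in\{1,\dots,N\}$ and each profile $\sigma\in S$, such that $\sum_{k=1}^N x^k_\sigma=\sum_{k=1}^N a^k_\sigma$ for every $\sigma\in S$. Then there is a unique $N$-person normal form game matrix $\widehat M$ of dimensions $m_1\times\cdots\times m_N$ with payoffs $\hat a^k$ such that $\widehat M$ can be obtained from $M$ by an OI-transformation and $\hat a^k_\sigma=x^k_\sigma$ for all $k$ and all $\sigma\in S$.
   Context: An $N$-person normal form game matrix of dimensions $m_1\times\cdots\times m_N$ assigns to each strategy profile $(i_1,\dots,i_N)$ with $1\le i_k\le m_k$ a payoff vector $(a^1_{i_1\dots i_N},\dots,a^N_{i_1\dots i_N})\in\mathbb{R}^N$, where $a^k$ is the payoff of player $k$ and $i_k$ indexes the strategy of player $k$. A preplay offer by player $p$ to player $q\neq p$ of amount $\delta\ge 0$ contingent on strategy $s$ of $q$ transforms a matrix by replacing, at every profile with $i_q=s$, the payoff $a^p$ by $a^p-\delta$ and $a^q$ by $a^q+\delta$, leaving all other payoffs unchanged; this map is a POI-transformation. An OI-transformation is any composition of finitely many POI-transformations. $\widehat M$ "can be obtained from $M$ by an OI-transformation" means $\widehat M=\tau(M)$ for some OI-transformation $\tau$. *)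

theory Defs
  imports Complex_Main "HOL-Library.FuncSet"
begin

text \<open>A game matrix is a payoff function
a k sigma (payoff of player k at profile sigma), extensional in both arguments.\<close>

definition profiles :: "nat \<Rightarrow> (nat \<Rightarrow> nat) \<Rightarrow> (nat \<Rightarrow> nat) set" where
  "profiles N m = PiE {1..N} (\<lambda>k. {1..m k})"

definition game_matrix :: "nat \<Rightarrow> (nat \<Rightarrow> nat) \<Rightarrow> (nat \<Rightarrow> (nat \<Rightarrow> nat) \<Rightarrow> real) \<Rightarrow> bool" where
  "game_matrix N m a \<longleftrightarrow> a \<in> {1..N} \<rightarrow>\<^sub>E (profiles N m \<rightarrow>\<^sub>E (UNIV :: real set))"

text \<open>Preplay offer by player p to player q of amount d contingent on strategy s of q.\<close>
definition poi :: "nat \<Rightarrow> (nat \<Rightarrow> nat) \<Rightarrow> nat \<Rightarrow> nat \<Rightarrow> nat \<Rightarrow> real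
    \<Rightarrow> (nat \<Rightarrow> (nat \<Rightarrow> nat) \<Rightarrow> real) \<Rightarrow> (nat \<Rightarrow> (nat \<Rightarrow> nat) \<Rightarrow> real)" where
  "poi N m p q s d a = (\<lambda>k \<sigma>.
     if k \<in> {1..N} \<and> \<sigma> \<in> profiles N m \<and> \<sigma> q = s then
       (if k = p then a k \<sigma> - d else if k = q then a k \<sigma> + d else a k \<sigma>)
     else a k \<sigma>)"

definition valid_poi :: "nat \<Rightarrow> (nat \<Rightarrow> nat) \<Rightarrow> nat \<Rightarrow> nat \<Rightarrow> nat \<Rightarrow> real \<Rightarrow> bool" where
  "valid_poi N m p q s d \<longleftrightarrow> p \<in> {1..N} \<and> q \<in> {1..N} \<and> p \<noteq> q \<and> s \<in> {1..m q} \<and> d \<ge> 0"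

inductive oi_reach :: "nat \<Rightarrow> (nat \<Rightarrow> nat) \<Rightarrow> (nat \<Rightarrow> (nat \<Rightarrow> nat) \<Rightarrow> real)
    \<Rightarrow> (nat \<Rightarrow> (nat \<Rightarrow> nat) \<Rightarrow> real) \<Rightarrow> bool" for N m where
  oi_refl: "oi_reach N m a a"
| oi_step: "oi_reach N m a b \<Longrightarrow> valid_poi N m p q s d \<Longrightarrow> oi_reach N m a (poi N m p q s d b)"

definition near_profiles :: "nat \<Rightarrow> (nat \<Rightarrow> nat) \<Rightarrow> (nat \<Rightarrow> nat) \<Rightarrow> (nat \<Rightarrow> nat) set" where
  "near_profiles N m p = {\<sigma> \<in> profiles N m. card {i \<in> {1..N}. \<sigma> i \<noteq> p i} \<le> 1}"

end

theory Submission imports Defs begin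

text \<open>
  Call a perturbation of a game matrix separable if the change of
  player k's payoff at profile \<sigma> has the form \<Sum>q. F k q (\<sigma> q), a sum of terms
  each depending on a single coordinate of \<sigma>.  Every preplay offer is such a
  perturbation (it depends only on the strategy of the receiver), so every
  OI-transformation is one.  Conversely, every separable perturbation which is
  balanced (for each q and t, \<Sum>k. F k q t = 0) is realised by an
  OI-transformation: it decomposes into transfers "player q pays player k the
  amount g (\<sigma> q)", and each transfer is two families of nonnegative offers.
  A separable function vanishing on the profiles near p vanishes everywhere,
  which gives uniqueness; for existence, the target differences x - a are
  extended from the profiles near p to a balanced separable function.
\<close>

type_synonym payoffs = "nat \<Rightarrow> (nat \<Rightarrow> nat) \<Rightarrow> real"

section \<open>Perturbations of game matrices\<close>

text \<open>Add D to the payoffs on the grid of players and profiles; entries outside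
  the grid are left untouched, so game matrices stay game matrices.\<close>
definition perturb :: "nat \<Rightarrow> (nat \<Rightarrow> nat) \<Rightarrow> payoffs \<Rightarrow> payoffs \<Rightarrow> payoffs" where
  "perturb N m a D = (\<lambda>k \<sigma>. if k \<in> {1..N} \<and> \<sigma> \<in> profiles N m then a k \<sigma> + D k \<sigma> else a k \<sigma>)"

lemma perturb_perturb:
  "perturb N m (perturb N m a D) E = perturb N m a (\<lambda>k \<sigma>. D k \<sigma> + E k \<sigma>)"
  by (auto simp: perturb_def fun_eq_iff)

lemma perturb_cong:
  assumes "\<And>k \<sigma>. k \<in> {1..N} \<Longrightarrow> \<sigma> \<in> profiles N m \<Longrightarrow> D k \<sigma> = E k \<sigma>"
  shows "perturb N m a D = perturb N m a E"
  using assms by (auto simp: perturb_def fun_eq_iff)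

lemma perturb_zero: "perturb N m a (\<lambda>k \<sigma>. 0) = a"
  by (simp add: perturb_def fun_eq_iff)

lemma game_matrix_perturb:
  assumes "game_matrix N m a"
  shows "game_matrix N m (perturb N m a D)"
  using assms unfolding game_matrix_def perturb_def by (auto simp: PiE_iff extensional_def)

section \<open>Offers and transfers are reachable\<close>

definition offer :: "nat \<Rightarrow> nat \<Rightarrow> nat \<Rightarrow> real \<Rightarrow> payoffs" where
  "offer p q s d = (\<lambda>k \<sigma>. if \<sigma> q = s then (if k = p then - d else if k = q then d else 0) else 0)"

lemma poi_perturb: "poi N m p q s d a = perturb N m a (offer p q s d)"
  by (auto simp: poi_def perturb_def offer_def fun_eq_iff)

lemma sum_offer:
  assumes "finite T" "\<sigma> q \<in> T"
  shows "(\<Sum>t\<in>T. offer p q t (c t) k \<sigma>) = offer p q (\<sigma> q) (c (\<sigma> q)) k \<sigma>"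
proof -
  have "(\<Sum>t\<in>T. offer p q t (c t) k \<sigma>) = (\<Sum>t\<in>T. if t = \<sigma> q then offer p q t (c t) k \<sigma> else 0)"
    by (intro sum.cong) (auto simp: offer_def)
  then show ?thesis using assms by simp
qed

lemma offers_reachable:
  assumes "oi_reach N m a b" "T \<subseteq> {1..m q}" "\<And>t. t \<in> T \<Longrightarrow> c t \<ge> 0"
    and "p \<in> {1..N}" "q \<in> {1..N}" "p \<noteq> q"
  shows "oi_reach N m a (perturb N m b (\<lambda>k \<sigma>. \<Sum>t\<in>T. offer p q t (c t) k \<sigma>))"
proof -
  have "finite T" using assms(2) finite_subset by blast
  then show ?thesis using assms(2,3)
  proof (induction T rule: finite_induct)
    case empty
    then show ?case using assms(1) by (simp add: perturb_zero)
  next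
    case (insert t T)
    then have "oi_reach N m a (perturb N m b (\<lambda>k \<sigma>. \<Sum>t\<in>T. offer p q t (c t) k \<sigma>))"
      by auto
    moreover have "valid_poi N m p q t (c t)"
      using insert assms(4-6) unfolding valid_poi_def by auto
    ultimately have "oi_reach N m a
        (poi N m p q t (c t) (perturb N m b (\<lambda>k \<sigma>. \<Sum>t\<in>T. offer p q t (c t) k \<sigma>)))"
      by (rule oi_step)
    then show ?case using insert by (simp add: poi_perturb perturb_perturb add.commute)
  qed
qed

definition transfer :: "nat \<Rightarrow> nat \<Rightarrow> (nat \<Rightarrow> real) \<Rightarrow> payoffs" where
  "transfer k q g = (\<lambda>j \<sigma>. if j = k then g (\<sigma> q) else if j = q then - g (\<sigma> q) else 0)"

lemma profile_coord: "\<sigma> \<in> profiles N m \<Longrightarrow> q \<in> {1..N} \<Longrightarrow> \<sigma> q \<in> {1..m q}"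
  unfolding profiles_def by (auto simp: PiE_iff)

text \<open>A transfer is realised by offers of C - g t from k to q contingent on each
  strategy t of q, followed by offers of C from q to k contingent on every
  strategy of k, where C bounds |g|; the latter amount to a constant payment C.\<close>
lemma transfer_reachable:
  assumes "oi_reach N m a b" "k \<in> {1..N}" "q \<in> {1..N}" "k \<noteq> q"
  shows "oi_reach N m a (perturb N m b (transfer k q g))"
proof -
  define C where "C = (\<Sum>t\<in>{1..m q}. \<bar>g t\<bar>)"
  have C_bound: "C - g t \<ge> 0" if "t \<in> {1..m q}" for t
    using member_le_sum[of t "{1..m q}" "\<lambda>t. \<bar>g t\<bar>"] that unfolding C_def by auto
  have "C \<ge> 0" unfolding C_def by (intro sum_nonneg) auto
  define D1 where "D1 = (\<lambda>j \<sigma>. \<Sum>t\<in>{1..m q}. offer k q t (C - g t) j \<sigma>)"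
  define D2 where "D2 = (\<lambda>j \<sigma>. \<Sum>t\<in>{1..m k}. offer q k t C j \<sigma>)"
  have "oi_reach N m a (perturb N m b D1)"
    unfolding D1_def by (rule offers_reachable[OF assms(1)]) (use C_bound assms in auto)
  then have "oi_reach N m a (perturb N m (perturb N m b D1) D2)"
    unfolding D2_def by (rule offers_reachable) (use \<open>C \<ge> 0\<close> assms in auto)
  moreover have "perturb N m b (\<lambda>j \<sigma>. D1 j \<sigma> + D2 j \<sigma>) = perturb N m b (transfer k q g)"
  proof (rule perturb_cong)
    fix j \<sigma> assume "j \<in> {1..N}" "\<sigma> \<in> profiles N m"
    then have "\<sigma> q \<in> {1..m q}" "\<sigma> k \<in> {1..m k}" using profile_coord assms by auto
    then show "D1 j \<sigma> + D2 j \<sigma> = transfer k q g j \<sigma>"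
      unfolding D1_def D2_def using assms(4)
      by (simp add: sum_offer[where c="\<lambda>t. C - g t"] sum_offer[where c="\<lambda>_. C"])
         (auto simp: offer_def transfer_def)
  qed
  ultimately show ?thesis by (simp add: perturb_perturb)
qed

lemma transfers_reachable:
  assumes "finite P" "P \<subseteq> {(k, q). k \<in> {1..N} \<and> q \<in> {1..N} \<and> k \<noteq> q}"
  shows "oi_reach N m a (perturb N m a (\<lambda>j \<sigma>. \<Sum>(k, q)\<in>P. transfer k q (g k q) j \<sigma>))"
  using assms
proof (induction P rule: finite_induct)
  case empty
  then show ?case by (simp add: perturb_zero oi_refl)
next
  case (insert kq P)
  obtain k q where kq: "kq = (k, q)" by fastforce
  have "oi_reach N m a (perturb N m (perturb N m a
          (\<lambda>j \<sigma>. \<Sum>(k, q)\<in>P. transfer k q (g k q) j \<sigma>)) (transfer k q (g k q)))"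
    using insert kq by (intro transfer_reachable) auto
  then show ?case using insert kq by (simp add: perturb_perturb add.commute)
qed

section \<open>Separable perturbations\<close>

definition sep :: "nat \<Rightarrow> (nat \<Rightarrow> nat \<Rightarrow> real) \<Rightarrow> (nat \<Rightarrow> nat) \<Rightarrow> real" where
  "sep N F \<sigma> = (\<Sum>q\<in>{1..N}. F q (\<sigma> q))"

lemma sum_all_transfers:
  fixes g :: "nat \<Rightarrow> nat \<Rightarrow> nat \<Rightarrow> real"
  assumes "finite K" "j \<in> K"
  shows "(\<Sum>(k, q)\<in>Sigma K (\<lambda>k. K - {k}). transfer k q (g k q) j \<sigma>)
       = (\<Sum>q\<in>K - {j}. g j q (\<sigma> q)) - (\<Sum>k\<in>K - {j}. g k j (\<sigma> j))"
proof -
  have pay: "(\<Sum>q\<in>K - {k}. transfer k q (g k q) j \<sigma>) = - g k j (\<sigma> j)" if "k \<in> K - {j}" for k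
  proof -
    have "(\<Sum>q\<in>K - {k}. transfer k q (g k q) j \<sigma>) = (\<Sum>q\<in>K - {k}. if q = j then - g k j (\<sigma> j) else 0)"
      using that by (intro sum.cong) (auto simp: transfer_def)
    then show ?thesis using that assms by simp
  qed
  have receive: "(\<Sum>q\<in>K - {j}. transfer j q (g j q) j \<sigma>) = (\<Sum>q\<in>K - {j}. g j q (\<sigma> q))"
    by (simp add: transfer_def)
  have "(\<Sum>(k, q)\<in>Sigma K (\<lambda>k. K - {k}). transfer k q (g k q) j \<sigma>)
      = (\<Sum>k\<in>K. \<Sum>q\<in>K - {k}. transfer k q (g k q) j \<sigma>)"
    using assms(1) by (simp add: sum.Sigma)
  also have "\<dots> = (\<Sum>q\<in>K - {j}. transfer j q (g j q) j \<sigma>)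
                + (\<Sum>k\<in>K - {j}. \<Sum>q\<in>K - {k}. transfer k q (g k q) j \<sigma>)"
    using assms by (simp add: sum.remove)
  also have "\<dots> = (\<Sum>q\<in>K - {j}. g j q (\<sigma> q)) - (\<Sum>k\<in>K - {j}. g k j (\<sigma> j))"
    using pay receive by (simp add: sum_negf)
  finally show ?thesis .
qed

text \<open>Sufficiency: a balanced separable perturbation is an OI-transformation.
  The diagonal terms F j j are exactly what player j pays to the others.\<close>
lemma balanced_separable_reachable:
  assumes balanced: "\<forall>q\<in>{1..N}. \<forall>t\<in>{1..m q}. (\<Sum>k\<in>{1..N}. F k q t) = 0"
  shows "oi_reach N m a (perturb N m a (\<lambda>k. sep N (F k)))"
proof -
  define K where "K = {1..N::nat}"
  have "oi_reach N m a (perturb N m a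
          (\<lambda>j \<sigma>. \<Sum>(k, q)\<in>Sigma K (\<lambda>k. K - {k}). transfer k q (F k q) j \<sigma>))"
    unfolding K_def by (intro transfers_reachable) auto
  moreover have "perturb N m a (\<lambda>j \<sigma>. \<Sum>(k, q)\<in>Sigma K (\<lambda>k. K - {k}). transfer k q (F k q) j \<sigma>)
               = perturb N m a (\<lambda>k. sep N (F k))"
  proof (rule perturb_cong)
    fix j \<sigma> assume j: "j \<in> {1..N}" and \<sigma>: "\<sigma> \<in> profiles N m"
    have "(\<Sum>k\<in>K. F k j (\<sigma> j)) = 0"
      using balanced j profile_coord[OF \<sigma> j] unfolding K_def by blast
    then have "- (\<Sum>k\<in>K - {j}. F k j (\<sigma> j)) = F j j (\<sigma> j)"
      using j sum.remove[of K j "\<lambda>k. F k j (\<sigma> j)"] unfolding K_def by simp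
    moreover have "sep N (F j) \<sigma> = F j j (\<sigma> j) + (\<Sum>q\<in>K - {j}. F j q (\<sigma> q))"
      using j unfolding sep_def K_def by (simp add: sum.remove)
    ultimately show "(\<Sum>(k, q)\<in>Sigma K (\<lambda>k. K - {k}). transfer k q (F k q) j \<sigma>) = sep N (F j) \<sigma>"
      using j sum_all_transfers[of K j F \<sigma>] unfolding K_def by simp
  qed
  ultimately show ?thesis by simp
qed

lemma offer_sep:
  assumes "q \<in> {1..N}"
  shows "offer p q s d k \<sigma>
       = sep N (\<lambda>q' t. if q' = q \<and> t = s then (if k = p then - d else if k = q then d else 0) else 0) \<sigma>"
proof -
  have "sep N (\<lambda>q' t. if q' = q \<and> t = s then (if k = p then - d else if k = q then d else 0) else 0) \<sigma>
      = (\<Sum>q'\<in>{1..N}. if q' = q then offer p q s d k \<sigma> else 0)"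
    unfolding sep_def offer_def by (intro sum.cong) auto
  then show ?thesis using assms by simp
qed

lemma reachable_separable:
  assumes "oi_reach N m a b"
  shows "\<exists>F. b = perturb N m a (\<lambda>k. sep N (F k))"
  using assms
proof (induction rule: oi_reach.induct)
  case (oi_refl a)
  show ?case
    by (rule exI[of _ "\<lambda>_ _ _. 0"]) (simp add: perturb_def sep_def fun_eq_iff)
next
  case (oi_step a b p q s d)
  then obtain F where F: "b = perturb N m a (\<lambda>k. sep N (F k))" by blast
  define F' where "F' = (\<lambda>k q' t. F k q' t
    + (if q' = q \<and> t = s then (if k = p then - d else if k = q then d else 0) else 0))"
  have "q \<in> {1..N}" using oi_step(2) unfolding valid_poi_def by simp
  then have "sep N (F k) \<sigma> + offer p q s d k \<sigma> = sep N (F' k) \<sigma>" for k \<sigma>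
    unfolding offer_sep[OF \<open>q \<in> {1..N}\<close>] F'_def sep_def by (simp add: sum.distrib)
  then have "poi N m p q s d b = perturb N m a (\<lambda>k. sep N (F' k))"
    by (simp add: F poi_perturb perturb_perturb)
  then show ?case by (rule exI[of _ F'])
qed

lemma game_matrix_reachable:
  assumes "game_matrix N m a" "oi_reach N m a b"
  shows "game_matrix N m b"
  using reachable_separable[OF assms(2)] game_matrix_perturb[OF assms(1)] by auto

section \<open>Profiles near p\<close>

lemma update_near:
  assumes "p \<in> profiles N m" "j \<in> {1..N}" "t \<in> {1..m j}"
  shows "p(j := t) \<in> near_profiles N m p"
proof -
  have "p(j := t) \<in> profiles N m"
    using assms unfolding profiles_def by (auto simp: PiE_iff extensional_def)
  moreover have "card {i \<in> {1..N}. (p(j := t)) i \<noteq> p i} \<le> card {j}"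
    by (intro card_mono) auto
  ultimately show ?thesis unfolding near_profiles_def by auto
qed

lemma self_near: "p \<in> profiles N m \<Longrightarrow> p \<in> near_profiles N m p"
  unfolding near_profiles_def by auto

lemma near_update:
  assumes "p \<in> profiles N m" "\<sigma> \<in> near_profiles N m p" "0 < N"
  obtains j where "j \<in> {1..N}" "\<sigma> = p(j := \<sigma> j)"
proof -
  define D where "D = {i \<in> {1..N}. \<sigma> i \<noteq> p i}"
  have \<sigma>: "\<sigma> \<in> profiles N m" and "card D \<le> 1"
    using assms(2) unfolding near_profiles_def D_def by auto
  have outside: "\<sigma> i = p i" if "i \<notin> {1..N}" for i
    using \<sigma> assms(1) that unfolding profiles_def by (auto simp: PiE_iff extensional_def)
  have "finite D" "D \<subseteq> {1..N}" unfolding D_def by auto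
  obtain j where "j \<in> {1..N}" "D \<subseteq> {j}"
  proof (cases "D = {}")
    case True
    show ?thesis by (rule that[of 1]) (use True assms(3) in auto)
  next
    case False
    then obtain j where "j \<in> D" by blast
    have "\<forall>x\<in>D. \<forall>y\<in>D. x = y"
      using card_le_Suc0_iff_eq[OF \<open>finite D\<close>] \<open>card D \<le> 1\<close> by simp
    then have "D \<subseteq> {j}" using \<open>j \<in> D\<close> by blast
    moreover have "j \<in> {1..N}" using \<open>j \<in> D\<close> \<open>D \<subseteq> {1..N}\<close> by blast
    ultimately show ?thesis by (rule that[rotated])
  qed
  moreover have "\<sigma> = p(j := \<sigma> j)"
    using \<open>D \<subseteq> {j}\<close> outside unfolding D_def by (auto simp: fun_eq_iff)
  ultimately show ?thesis using that by blast
qed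

text \<open>A separable function is determined by its values near p: if it vanishes
  there, each summand H j is constant, so it vanishes everywhere.\<close>
lemma sep_vanishing_near:
  assumes "p \<in> profiles N m" "\<forall>\<tau>\<in>near_profiles N m p. sep N H \<tau> = 0" "\<sigma> \<in> profiles N m"
  shows "sep N H \<sigma> = 0"
proof -
  have "H j (\<sigma> j) = H j (p j)" if j: "j \<in> {1..N}" for j
  proof -
    have "sep N H (p(j := \<sigma> j)) = H j (\<sigma> j) + (\<Sum>q\<in>{1..N} - {j}. H q (p q))"
      "sep N H p = H j (p j) + (\<Sum>q\<in>{1..N} - {j}. H q (p q))"
      using j unfolding sep_def by (simp_all add: sum.remove)
    then show ?thesis
      using assms(2) update_near[OF assms(1) j profile_coord[OF assms(3) j]] self_near[OF assms(1)]
      by simp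
  qed
  then have "sep N H \<sigma> = sep N H p" unfolding sep_def by (intro sum.cong) auto
  then show ?thesis using assms(2) self_near[OF assms(1)] by simp
qed

lemma reachable_determined_near:
  assumes "p \<in> profiles N m" "oi_reach N m a b" "oi_reach N m a c"
    and "\<forall>k\<in>{1..N}. \<forall>\<sigma>\<in>near_profiles N m p. b k \<sigma> = c k \<sigma>"
  shows "b = c"
proof -
  obtain F G where F: "b = perturb N m a (\<lambda>k. sep N (F k))"
    and G: "c = perturb N m a (\<lambda>k. sep N (G k))"
    using reachable_separable assms(2,3) by metis
  have diff: "sep N (\<lambda>q t. F k q t - G k q t) \<sigma> = b k \<sigma> - c k \<sigma>"
    if "k \<in> {1..N}" "\<sigma> \<in> profiles N m" for k \<sigma>
    using that by (simp add: F G perturb_def sep_def sum_subtractf)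
  have "b k \<sigma> = c k \<sigma>" if "k \<in> {1..N}" "\<sigma> \<in> profiles N m" for k \<sigma>
  proof -
    have "\<forall>\<tau>\<in>near_profiles N m p. sep N (\<lambda>q t. F k q t - G k q t) \<tau> = 0"
      using assms(4) diff that(1) unfolding near_profiles_def by auto
    then show ?thesis using sep_vanishing_near[OF assms(1)] diff that by fastforce
  qed
  then show ?thesis by (auto simp: F G perturb_def fun_eq_iff)
qed

text \<open>Existence: the separable extension of a function f from the profiles near p,
  obtained by summing its one-coordinate deviations from f p and spreading f p
  evenly over the coordinates.\<close>
definition near_lift :: "nat \<Rightarrow> (nat \<Rightarrow> nat) \<Rightarrow> ((nat \<Rightarrow> nat) \<Rightarrow> real) \<Rightarrow> nat \<Rightarrow> nat \<Rightarrow> real" where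
  "near_lift N p f q t = f (p(q := t)) - f p + f p / real N"

lemma near_lift_agrees:
  assumes "p \<in> profiles N m" "\<sigma> \<in> near_profiles N m p" "0 < N"
  shows "sep N (near_lift N p f) \<sigma> = f \<sigma>"
proof -
  obtain j where j: "j \<in> {1..N}" "\<sigma> = p(j := \<sigma> j)" using near_update[OF assms] .
  have "f (p(q := \<sigma> q)) - f p = (if q = j then f \<sigma> - f p else 0)" for q
  proof (cases "q = j")
    case True
    then show ?thesis using j(2)[symmetric] by simp
  next
    case False
    then have "\<sigma> q = p q" using j(2) by (metis fun_upd_other)
    then show ?thesis using False by simp
  qed
  then have "(\<Sum>q\<in>{1..N}. f (p(q := \<sigma> q)) - f p) = f \<sigma> - f p"
    using j(1) by simp
  then show ?thesis
    using assms(3) unfolding sep_def near_lift_def by (simp add: sum.distrib)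
qed

lemma near_lift_balanced:
  assumes "p \<in> profiles N m" "\<forall>\<tau>\<in>near_profiles N m p. (\<Sum>k\<in>{1..N}. w k \<tau>) = 0"
    and "q \<in> {1..N}" "t \<in> {1..m q}"
  shows "(\<Sum>k\<in>{1..N}. near_lift N p (w k) q t) = 0"
  using assms update_near[OF assms(1,3,4)] self_near[OF assms(1)]
  by (simp add: near_lift_def sum.distrib sum_subtractf flip: sum_divide_distrib)

theorem theorem4:
  fixes N :: nat and m :: "nat \<Rightarrow> nat"
    and a x :: "nat \<Rightarrow> (nat \<Rightarrow> nat) \<Rightarrow> real" and p :: "nat \<Rightarrow> nat"
  assumes "game_matrix N m a"
    and "p \<in> profiles N m"
    and "\<forall>\<sigma>\<in>near_profiles N m p. (\<Sum>k=1..N. x k \<sigma>) = (\<Sum>k=1..N. a k \<sigma>)"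
  shows "\<exists>!ah. game_matrix N m ah \<and> oi_reach N m a ah \<and>
           (\<forall>k\<in>{1..N}. \<forall>\<sigma>\<in>near_profiles N m p. ah k \<sigma> = x k \<sigma>)"
proof -
  define w where "w = (\<lambda>k \<tau>. x k \<tau> - a k \<tau>)"
  define ah where "ah = perturb N m a (\<lambda>k. sep N (near_lift N p (w k)))"
  have "\<forall>\<tau>\<in>near_profiles N m p. (\<Sum>k\<in>{1..N}. w k \<tau>) = 0"
    using assms(3) unfolding w_def by (simp add: sum_subtractf)
  then have reach: "oi_reach N m a ah"
    unfolding ah_def using near_lift_balanced[OF assms(2)]
    by (intro balanced_separable_reachable) blast
  have agree: "\<forall>k\<in>{1..N}. \<forall>\<sigma>\<in>near_profiles N m p. ah k \<sigma> = x k \<sigma>"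
    using near_lift_agrees[OF assms(2)]
    by (auto simp: ah_def perturb_def w_def near_profiles_def)
  show ?thesis
  proof (rule ex1I[of _ ah])
    show "game_matrix N m ah \<and> oi_reach N m a ah \<and> (\<forall>k\<in>{1..N}. \<forall>\<sigma>\<in>near_profiles N m p. ah k \<sigma> = x k \<sigma>)"
      using game_matrix_reachable[OF assms(1) reach] reach agree by blast
  next
    fix b assume "game_matrix N m b \<and> oi_reach N m a b \<and> (\<forall>k\<in>{1..N}. \<forall>\<sigma>\<in>near_profiles N m p. b k \<sigma> = x k \<sigma>)"
    then show "b = ah" using reachable_determined_near[OF assms(2)] reach agree by metis
  qed
qed

end
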